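(* Let $K$ be a nonempty compact subset of $\mathbb R^d$, let $n\ge1$ and $q\le0$. There exists $\nu_n\in\mathcal P(K)$ with finite support such that for every finitely supported $\mu=\sum_{i=1}^Np_i\delta_{x_i}\in\mathcal P(K)$ (with $p_i>0$) and every $\theta\in(0,1)$, the measure $\nu=(1-\theta)\mu+\theta\nu_n$ satisfies $$I_\nu(3\cdot2^{-n},q)\le N(1-\theta)^qa^q+\theta^q+\frac{\theta^q}{2^q}C_n(K)^{1-q},$$ where $a=\min_ip_i$. Moreover $\nu(B(x,3\cdot2^{-n}))>0$ for every $x\in K$.
   Context: $\mathcal P(K)$ is the set of Borel probability measures on $K$. Balls $B(x,r)$ are taken with respect to the $\ell^\infty$ norm on $\mathbb R^d$, and $I_\nu(r,q)=\int_K\nu(B(x,r))^{q-1}d\nu(x)$. $C_n(K)$ is the number of connected components of the union of the half-closed dyadic cubes $\prod_{j=1}^d[k_j2^{-n},(k_j+1)2^{-n})$, $k_j\in\mathbb Z$, that meet $K$. *)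

theory Defs
  imports "HOL-Analysis.Analysis" "HOL-Probability.Probability"
begin

definition linf_ball :: "real^'d \<Rightarrow> real \<Rightarrow> (real^'d) set" where
  "linf_ball x r = {y. \<forall>j. \<bar>y $ j - x $ j\<bar> \<le> r}"

definition I_nu :: "(real^'d) pmf \<Rightarrow> real \<Rightarrow> real \<Rightarrow> real" where
  "I_nu \<nu> r q = measure_pmf.expectation \<nu> (\<lambda>x. (measure_pmf.prob \<nu> (linf_ball x r)) powr (q - 1))"

definition dyadic_cube :: "nat \<Rightarrow> int^'d \<Rightarrow> (real^'d) set" where
  "dyadic_cube n k = {y. \<forall>j. of_int (k $ j) / 2 ^ n \<le> y $ j \<and> y $ j < (of_int (k $ j) + 1) / 2 ^ n}"

definition C_n :: "nat \<Rightarrow> (real^'d) set \<Rightarrow> nat" where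
  "C_n n K = card (components (\<Union> {dyadic_cube n k | k. dyadic_cube n k \<inter> K \<noteq> {}}))"

definition mixture :: "real \<Rightarrow> 'a pmf \<Rightarrow> 'a pmf \<Rightarrow> 'a pmf" where
  "mixture \<theta> p q = bind_pmf (bernoulli_pmf \<theta>) (\<lambda>b. if b then q else p)"

end

theory Submission
  imports Defs
begin

text \<open>
  Put one point of \<open>K\<close> into every generation-\<open>n\<close> dyadic cube meeting \<open>K\<close>. Points of touching
  cubes are within sup-distance \<open>2 * 2^-n\<close>, so the ball of radius \<open>3 * 2^-n\<close> about such a
  point carries the mass of all neighbouring cubes, and it suffices to weight the cubes so that
  \<open>\<Sum>k. \<rho>(k) \<rho>(N(k))^(q-1)\<close> is small, \<open>N(k)\<close> being \<open>k\<close> together with its neighbours.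

  Choose one root cube in each connected component of the union of the cubes (at most \<open>C_n(K)\<close>
  roots) and weight a cube by its graph distance \<open>i\<close> to the roots: \<open>c_0 = 1/(2|R|)\<close> and
  \<open>c_(i+1) = c_i^(1-q) / (2|I|)\<close>. A cube of depth \<open>i+1\<close> has a neighbour of depth at most \<open>i\<close>, hence
  of weight at least \<open>c_i\<close>, so its term is at most \<open>c_(i+1) c_i^(q-1) = 1/(2|I|)\<close>; a root
  contributes at most \<open>c_0^q\<close>. The total weight is at most 1, and since \<open>q \<le> 0\<close> normalising it
  to 1 only decreases the sum.

  In the mixture, an atom of \<open>\<mu>\<close> sees mass at least \<open>(1-\<theta>) a\<close> in its ball and an atom of
  \<open>\<nu>_n\<close> at least \<open>\<theta>\<close> times its \<open>\<nu>_n\<close>-mass; as \<open>q - 1 < 0\<close> these lower bounds give the two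
  terms of the estimate.
\<close>

section \<open>Finite discrete measures and mixtures\<close>

lemma mult_powr_le_powr:
  fixes t s q :: real
  assumes "0 < t" "t \<le> s" "q \<le> 1"
  shows "t * s powr (q - 1) \<le> t powr q"
proof -
  have "s powr (q - 1) \<le> t powr (q - 1)"
    using assms by (intro powr_mono2') auto
  then have "t * s powr (q - 1) \<le> t * t powr (q - 1)"
    using assms(1) by simp
  also have "\<dots> = t powr q"
    using assms(1) by (simp add: powr_mult_base)
  finally show ?thesis .
qed

lemma ex_pmf_with_weights:
  fixes w :: "'a \<Rightarrow> real"
  assumes "finite I" "\<And>k. k \<in> I \<Longrightarrow> 0 < w k" "sum w I = 1"
  shows "\<exists>\<rho>. set_pmf \<rho> = I \<and> (\<forall>k\<in>I. pmf \<rho> k = w k)"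
proof -
  define g where "g k = (if k \<in> I then w k else 0)" for k
  have g_nonneg: "0 \<le> g k" for k
    using assms(2) by (simp add: g_def less_imp_le)
  have "(\<integral>\<^sup>+k. ennreal (g k) \<partial>count_space UNIV) = (\<Sum>k\<in>I. ennreal (g k))"
    by (rule nn_integral_count_space') (auto simp: g_def assms(1))
  also have "\<dots> = ennreal (sum g I)"
    using g_nonneg by simp
  also have "sum g I = 1"
    using assms(3) by (simp add: g_def)
  finally have total: "(\<integral>\<^sup>+k. ennreal (g k) \<partial>count_space UNIV) = 1"
    by simp
  have "{k. g k \<noteq> 0} = I"
    using assms(2) by (force simp: g_def)
  then have "set_pmf (embed_pmf g) = I"
    using set_embed_pmf[OF g_nonneg total] by simp
  moreover have "\<forall>k\<in>I. pmf (embed_pmf g) k = w k"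
    by (simp add: pmf_embed_pmf[OF g_nonneg total] g_def)
  ultimately show ?thesis
    by blast
qed

lemma expectation_mono_pmf:
  fixes f g :: "'a \<Rightarrow> real"
  assumes "finite (set_pmf \<rho>)" "\<And>x. x \<in> set_pmf \<rho> \<Longrightarrow> f x \<le> g x"
  shows "measure_pmf.expectation \<rho> f \<le> measure_pmf.expectation \<rho> g"
  using assms by (intro integral_mono_AE integrable_measure_pmf_finite AE_pmfI)

lemma measure_pmf_prob_mixture:
  assumes "0 \<le> \<theta>" "\<theta> \<le> 1"
  shows "measure_pmf.prob (mixture \<theta> \<mu> \<nu>) A
    = (1 - \<theta>) * measure_pmf.prob \<mu> A + \<theta> * measure_pmf.prob \<nu> A"
proof -
  have "emeasure (measure_pmf (mixture \<theta> \<mu> \<nu>)) A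
      = emeasure (measure_pmf \<nu>) A * \<theta> + emeasure (measure_pmf \<mu>) A * (1 - \<theta>)"
    using assms by (simp add: mixture_def)
  also have "\<dots> = ennreal ((1 - \<theta>) * measure_pmf.prob \<mu> A + \<theta> * measure_pmf.prob \<nu> A)"
    using assms by (simp add: measure_pmf.emeasure_eq_measure ennreal_mult' ennreal_plus[symmetric] mult.commute)
  finally have "ennreal (measure_pmf.prob (mixture \<theta> \<mu> \<nu>) A)
      = ennreal ((1 - \<theta>) * measure_pmf.prob \<mu> A + \<theta> * measure_pmf.prob \<nu> A)"
    by (simp only: measure_pmf.emeasure_eq_measure)
  then show ?thesis
    using assms by (subst (asm) ennreal_inj) auto
qed

lemma measure_pmf_prob_mixture_pos:
  assumes "0 < \<theta>" "\<theta> \<le> 1" "set_pmf \<nu> \<inter> A \<noteq> {}"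
  shows "0 < measure_pmf.prob (mixture \<theta> \<mu> \<nu>) A"
proof -
  obtain y where "y \<in> set_pmf \<nu>" "y \<in> A"
    using assms(3) by blast
  then have "0 < \<theta> * measure_pmf.prob \<nu> A"
    using assms(1) by (simp add: measure_pmf_posI)
  moreover have "0 \<le> (1 - \<theta>) * measure_pmf.prob \<mu> A"
    using assms(2) by simp
  ultimately show ?thesis
    unfolding measure_pmf_prob_mixture[OF less_imp_le[OF assms(1)] assms(2)] by linarith
qed

lemma expectation_mixture:
  fixes f :: "'a \<Rightarrow> real"
  assumes "0 \<le> \<theta>" "\<theta> \<le> 1" "finite (set_pmf \<mu>)" "finite (set_pmf \<nu>)"
  shows "measure_pmf.expectation (mixture \<theta> \<mu> \<nu>) f
    = (1 - \<theta>) * measure_pmf.expectation \<mu> f + \<theta> * measure_pmf.expectation \<nu> f"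
  unfolding mixture_def using assms
  by (subst pmf_expectation_bind[where A = UNIV]) (auto simp: UNIV_bool)

lemma expectation_powr_le_card_Min:
  fixes \<mu> :: "'a pmf" and P :: "'a \<Rightarrow> real" and c q :: real
  assumes "finite (set_pmf \<mu>)" "0 < c" "q \<le> 0"
    and "\<And>x. x \<in> set_pmf \<mu> \<Longrightarrow> c * pmf \<mu> x \<le> P x"
  shows "c * measure_pmf.expectation \<mu> (\<lambda>x. P x powr (q - 1))
    \<le> card (set_pmf \<mu>) * (c * Min (pmf \<mu> ` set_pmf \<mu>)) powr q"
proof -
  define a where "a = Min (pmf \<mu> ` set_pmf \<mu>)"
  have "c * measure_pmf.expectation \<mu> (\<lambda>x. P x powr (q - 1))
      = (\<Sum>x\<in>set_pmf \<mu>. c * pmf \<mu> x * P x powr (q - 1))"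
    by (simp add: integral_measure_pmf_real[OF assms(1)] sum_distrib_left mult_ac)
  also have "\<dots> \<le> (\<Sum>x\<in>set_pmf \<mu>. (c * a) powr q)"
  proof (rule sum_mono)
    fix x
    assume x: "x \<in> set_pmf \<mu>"
    have "a \<le> pmf \<mu> x" "a \<in> pmf \<mu> ` set_pmf \<mu>"
      unfolding a_def using assms(1) x set_pmf_not_empty by (auto intro: Min_le Min_in)
    then have a: "0 < a" "a \<le> pmf \<mu> x"
      by (auto simp: pmf_positive)
    have "c * pmf \<mu> x * P x powr (q - 1) \<le> (c * pmf \<mu> x) powr q"
      using assms(2,3) assms(4)[OF x] a by (intro mult_powr_le_powr) auto
    also have "\<dots> \<le> (c * a) powr q"
      using assms(2,3) a by (intro powr_mono2') auto
    finally show "c * pmf \<mu> x * P x powr (q - 1) \<le> (c * a) powr q" .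
  qed
  finally show ?thesis
    by (simp add: a_def)
qed

lemma expectation_powr_scaled_le:
  fixes \<nu> :: "'a pmf" and P Q :: "'a \<Rightarrow> real" and c q :: real
  assumes "finite (set_pmf \<nu>)" "0 < c" "q \<le> 0"
    and "\<And>x. x \<in> set_pmf \<nu> \<Longrightarrow> 0 < Q x" "\<And>x. x \<in> set_pmf \<nu> \<Longrightarrow> c * Q x \<le> P x"
  shows "c * measure_pmf.expectation \<nu> (\<lambda>x. P x powr (q - 1))
    \<le> c powr q * measure_pmf.expectation \<nu> (\<lambda>x. Q x powr (q - 1))"
proof -
  have "c * P x powr (q - 1) \<le> c powr q * Q x powr (q - 1)" if x: "x \<in> set_pmf \<nu>" for x
  proof -
    have "c * P x powr (q - 1) \<le> c * (c * Q x) powr (q - 1)"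
      using assms(2-5) x by (intro mult_left_mono powr_mono2') auto
    also have "\<dots> = c powr q * Q x powr (q - 1)"
      using assms(2,4) x by (simp add: powr_mult powr_mult_base mult.assoc)
    finally show ?thesis .
  qed
  then have "measure_pmf.expectation \<nu> (\<lambda>x. c * P x powr (q - 1))
      \<le> measure_pmf.expectation \<nu> (\<lambda>x. c powr q * Q x powr (q - 1))"
    using assms(1) by (intro expectation_mono_pmf) auto
  then show ?thesis
    by simp
qed

lemma expectation_mixture_ball_le:
  fixes \<mu> \<nu> :: "'a pmf" and B :: "'a \<Rightarrow> 'a set" and q \<theta> :: real
  assumes fin: "finite (set_pmf \<mu>)" "finite (set_pmf \<nu>)" and \<theta>: "0 < \<theta>" "\<theta> < 1"
    and q: "q \<le> 0" and self: "\<And>x. x \<in> B x"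
  defines "\<rho> \<equiv> mixture \<theta> \<mu> \<nu>"
  shows "measure_pmf.expectation \<rho> (\<lambda>x. measure_pmf.prob \<rho> (B x) powr (q - 1))
    \<le> card (set_pmf \<mu>) * (1 - \<theta>) powr q * Min (pmf \<mu> ` set_pmf \<mu>) powr q
       + \<theta> powr q * measure_pmf.expectation \<nu> (\<lambda>x. measure_pmf.prob \<nu> (B x) powr (q - 1))"
proof -
  have prob_\<rho>: "measure_pmf.prob \<rho> A
      = (1 - \<theta>) * measure_pmf.prob \<mu> A + \<theta> * measure_pmf.prob \<nu> A" for A
    unfolding \<rho>_def using \<theta> by (intro measure_pmf_prob_mixture) auto
  have "(1 - \<theta>) * pmf \<mu> x \<le> measure_pmf.prob \<rho> (B x)" for x
  proof -
    have "pmf \<mu> x \<le> measure_pmf.prob \<mu> (B x)"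
      unfolding measure_pmf_single[symmetric] using self by (intro measure_pmf.finite_measure_mono) auto
    then show ?thesis
      unfolding prob_\<rho> using \<theta> by (simp add: mult_left_mono add_increasing2)
  qed
  then have "(1 - \<theta>) * measure_pmf.expectation \<mu> (\<lambda>x. measure_pmf.prob \<rho> (B x) powr (q - 1))
      \<le> card (set_pmf \<mu>) * ((1 - \<theta>) * Min (pmf \<mu> ` set_pmf \<mu>)) powr q"
    using fin(1) \<theta> q by (intro expectation_powr_le_card_Min) auto
  moreover have "\<theta> * measure_pmf.expectation \<nu> (\<lambda>x. measure_pmf.prob \<rho> (B x) powr (q - 1))
      \<le> \<theta> powr q * measure_pmf.expectation \<nu> (\<lambda>x. measure_pmf.prob \<nu> (B x) powr (q - 1))"
    using fin(2) \<theta> q self unfolding prob_\<rho>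
    by (intro expectation_powr_scaled_le) (auto intro: measure_pmf_posI)
  ultimately show ?thesis
    using \<theta> fin unfolding \<rho>_def by (simp add: expectation_mixture powr_mult mult_ac)
qed

section \<open>Layered weights on a rooted graph\<close>

lemma ex_distance_from_roots:
  fixes E :: "'a \<Rightarrow> 'a \<Rightarrow> bool"
  assumes "\<And>k. k \<in> I \<Longrightarrow> \<exists>r\<in>R. E\<^sup>*\<^sup>* r k"
  shows "\<exists>d :: 'a \<Rightarrow> nat. (\<forall>k\<in>R. d k = 0) \<and> (\<forall>k\<in>I - R. \<exists>z. E z k \<and> d z < d k)"
proof -
  define d where "d k = (LEAST i. \<exists>r\<in>R. (E ^^ i) r k)" for k
  have d_le: "d k \<le> i" if "r \<in> R" "(E ^^ i) r k" for k r i
    unfolding d_def by (rule Least_le) (use that in blast)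
  have d_attained: "\<exists>r\<in>R. (E ^^ d k) r k" if k: "k \<in> I" for k
  proof -
    obtain r i where "r \<in> R" "(E ^^ i) r k"
      using assms[OF k] rtranclp_power[of E] by blast
    then have "\<exists>i. \<exists>r\<in>R. (E ^^ i) r k"
      by blast
    then show ?thesis
      unfolding d_def by (rule LeastI_ex)
  qed
  have "\<exists>z. E z k \<and> d z < d k" if k: "k \<in> I - R" for k
  proof -
    obtain r where r: "r \<in> R" "(E ^^ d k) r k"
      using d_attained k by blast
    have "d k \<noteq> 0"
    proof
      assume "d k = 0"
      with r(2) have "r = k"
        by simp
      with r(1) k show False
        by simp
    qed
    then obtain i where i: "d k = Suc i"
      using not0_implies_Suc by blast
    obtain z where "(E ^^ i) r z" "E z k"
      using r(2) unfolding i by (rule relpowp_Suc_E)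
    then show ?thesis
      using d_le[OF r(1)] i by (metis less_Suc_eq_le)
  qed
  moreover have "\<forall>k\<in>R. d k = 0"
    using d_le[of _ 0] by simp
  ultimately show ?thesis
    by blast
qed

lemma expectation_normalized_weights:
  fixes w :: "'a \<Rightarrow> real" and N :: "'a \<Rightarrow> 'a set" and q :: real
  assumes "finite I" "I \<noteq> {}" "\<And>k. k \<in> I \<Longrightarrow> 0 < w k"
  obtains \<rho> where "set_pmf \<rho> = I"
    "measure_pmf.expectation \<rho> (\<lambda>k. measure_pmf.prob \<rho> (N k) powr (q - 1))
      = (\<Sum>k\<in>I. w k * (\<Sum>z\<in>N k \<inter> I. w z) powr (q - 1)) / sum w I powr q"
proof -
  define T where "T = sum w I"
  have T: "0 < T"
    unfolding T_def using assms by (intro sum_pos) auto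
  obtain \<rho> where \<rho>: "set_pmf \<rho> = I" "\<And>k. k \<in> I \<Longrightarrow> pmf \<rho> k = w k / T"
    using ex_pmf_with_weights[of I "\<lambda>k. w k / T"] assms T
    by (auto simp: T_def sum_divide_distrib[symmetric])
  have prob: "measure_pmf.prob \<rho> (N k) = (\<Sum>z\<in>N k \<inter> I. w z) / T" for k
  proof -
    have "measure_pmf.prob \<rho> (N k) = measure_pmf.prob \<rho> (N k \<inter> I)"
      using measure_Int_set_pmf[of \<rho> "N k"] \<rho>(1) by simp
    also have "\<dots> = (\<Sum>z\<in>N k \<inter> I. w z / T)"
      using assms(1) \<rho>(2) by (simp add: measure_measure_pmf_finite)
    finally show ?thesis
      by (simp add: sum_divide_distrib)
  qed
  have "measure_pmf.expectation \<rho> (\<lambda>k. measure_pmf.prob \<rho> (N k) powr (q - 1))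
      = (\<Sum>k\<in>I. ((\<Sum>z\<in>N k \<inter> I. w z) / T) powr (q - 1) * (w k / T))"
    using assms(1) \<rho> by (subst integral_measure_pmf_real[of I]) (simp_all add: prob)
  also have "\<dots> = (\<Sum>k\<in>I. w k * (\<Sum>z\<in>N k \<inter> I. w z) powr (q - 1) / T powr q)"
  proof (rule sum.cong)
    fix k assume "k \<in> I"
    have "T powr q = T * T powr (q - 1)"
      using T by (simp add: powr_mult_base)
    then show "((\<Sum>z\<in>N k \<inter> I. w z) / T) powr (q - 1) * (w k / T)
        = w k * (\<Sum>z\<in>N k \<inter> I. w z) powr (q - 1) / T powr q"
      using T by (simp add: powr_divide sum_nonneg mult_ac)
  qed simp
  finally show ?thesis
    using that \<rho>(1) by (simp add: T_def sum_divide_distrib)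
qed

primrec layer_weight :: "real \<Rightarrow> real \<Rightarrow> real \<Rightarrow> nat \<Rightarrow> real" where
  "layer_weight c e D 0 = c"
| "layer_weight c e D (Suc i) = layer_weight c e D i powr e / D"

lemma powr_divide_bounds:
  fixes x e D :: real
  assumes "0 < x" "x \<le> 1" "1 \<le> e" "1 \<le> D"
  shows "0 < x powr e / D" "x powr e / D \<le> x" "x powr e / D \<le> 1 / D"
proof -
  have "x powr e \<le> x"
    using powr_mono'[of 1 e x] assms by simp
  moreover have "x powr e / D \<le> x powr e"
    using assms by (simp add: divide_le_eq mult_le_cancel_left1)
  ultimately show "x powr e / D \<le> x"
    by linarith
  show "x powr e / D \<le> 1 / D"
    using \<open>x powr e \<le> x\<close> assms by (simp add: divide_right_mono)
  show "0 < x powr e / D"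
    using assms by simp
qed

lemma layer_weight_bounds:
  assumes "0 < c" "c \<le> 1" "1 \<le> e" "1 \<le> D"
  shows "0 < layer_weight c e D i \<and> layer_weight c e D i \<le> 1"
proof (induction i)
  case (Suc i)
  then have "0 < layer_weight c e D i" "layer_weight c e D i \<le> 1"
    by auto
  then have "0 < layer_weight c e D i powr e / D" "layer_weight c e D i powr e / D \<le> layer_weight c e D i"
    using powr_divide_bounds(1,2) assms(3,4) by blast+
  then show ?case
    unfolding layer_weight.simps using \<open>layer_weight c e D i \<le> 1\<close> by (intro conjI) linarith+
qed (use assms in simp)

locale rooted_layering =
  fixes I R :: "'a set" and N :: "'a \<Rightarrow> 'a set" and d :: "'a \<Rightarrow> nat" and q :: real
  assumes finite_I: "finite I" and roots_subset: "R \<subseteq> I" and roots_nonempty: "R \<noteq> {}"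
    and in_nbhd: "\<And>k. k \<in> I \<Longrightarrow> k \<in> N k"
    and depth_roots: "\<And>k. k \<in> R \<Longrightarrow> d k = 0"
    and parent: "\<And>k. k \<in> I - R \<Longrightarrow> \<exists>z\<in>N k \<inter> I. d z < d k"
    and q_nonpos: "q \<le> 0"
begin

definition D :: real where "D = 2 * real (card I)"

definition c0 :: real where "c0 = 1 / (2 * real (card R))"

abbreviation layer :: "nat \<Rightarrow> real" where "layer \<equiv> layer_weight c0 (1 - q) D"

definition weight :: "'a \<Rightarrow> real" where "weight k = layer (d k)"

definition nbhd_weight :: "'a \<Rightarrow> real" where "nbhd_weight k = (\<Sum>z\<in>N k \<inter> I. weight z)"

lemma card_roots: "1 \<le> card R" "card R \<le> card I"
  using roots_nonempty roots_subset finite_I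
  by (auto simp: Suc_le_eq card_gt_0_iff card_mono finite_subset)

lemma D_ge_1: "1 \<le> D"
  using card_roots by (simp add: D_def)

lemma c0_bounds: "0 < c0" "c0 \<le> 1"
  using card_roots by (auto simp: c0_def)

lemma layer_bounds:
  "0 < layer i" "layer i \<le> 1"
  "layer (Suc i) \<le> layer i"
  "layer (Suc i) \<le> 1 / D"
  using layer_weight_bounds[OF c0_bounds _ D_ge_1, of "1 - q"]
    powr_divide_bounds[of "layer i" "1 - q" D] q_nonpos D_ge_1
  by auto

lemma layer_antimono: "i \<le> j \<Longrightarrow> layer j \<le> layer i"
  by (rule lift_Suc_antimono_le) (use layer_bounds in auto)

lemma weight_pos: "0 < weight k"
  using layer_bounds by (simp add: weight_def)

lemma weight_root: "k \<in> R \<Longrightarrow> weight k = c0"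
  by (simp add: weight_def depth_roots)

lemma depth_Suc:
  assumes "k \<in> I - R"
  obtains i where "d k = Suc i"
  using parent[OF assms] by (metis less_nat_zero_code not0_implies_Suc)

lemma weight_nonroot: "k \<in> I - R \<Longrightarrow> weight k \<le> 1 / D"
  using layer_bounds by (elim depth_Suc) (simp add: weight_def)

lemma sum_weight_le_1: "sum weight I \<le> 1"
proof -
  have "sum weight I = sum weight (I - R) + sum weight R"
    using sum.subset_diff[OF roots_subset finite_I] .
  also have "sum weight (I - R) \<le> card (I - R) * (1 / D)"
    using sum_bounded_above[of "I - R" weight "1 / D"] weight_nonroot by auto
  also have "\<dots> \<le> card I * (1 / D)"
    using finite_I D_ge_1 by (intro mult_right_mono) (auto intro: card_mono)
  also have "sum weight R = card R * c0"
    by (simp add: weight_root)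
  finally show ?thesis
    using card_roots D_ge_1 by (simp add: D_def c0_def)
qed

lemma nbhd_term_root:
  assumes "k \<in> R"
  shows "weight k * nbhd_weight k powr (q - 1) \<le> c0 powr q"
proof -
  have "weight k \<le> nbhd_weight k"
    unfolding nbhd_weight_def using assms roots_subset in_nbhd finite_I weight_pos
    by (intro member_le_sum) (auto intro: less_imp_le)
  then show ?thesis
    using assms c0_bounds q_nonpos by (simp add: weight_root mult_powr_le_powr)
qed

lemma nbhd_term_nonroot:
  assumes k: "k \<in> I - R"
  shows "weight k * nbhd_weight k powr (q - 1) \<le> 1 / D"
proof -
  obtain i where i: "d k = Suc i"
    using k by (rule depth_Suc)
  obtain z where z: "z \<in> N k \<inter> I" "d z < d k"
    using parent[OF k] by blast
  have "layer i \<le> weight z"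
    unfolding weight_def using z i by (intro layer_antimono) simp
  also have "weight z \<le> nbhd_weight k"
    unfolding nbhd_weight_def using z finite_I weight_pos
    by (intro member_le_sum) (auto intro: less_imp_le)
  finally have "nbhd_weight k powr (q - 1) \<le> layer i powr (q - 1)"
    using q_nonpos layer_bounds by (intro powr_mono2') auto
  then have "weight k * nbhd_weight k powr (q - 1) \<le> weight k * layer i powr (q - 1)"
    using weight_pos[of k] by simp
  also have "\<dots> = layer i powr (1 - q) * layer i powr (q - 1) / D"
    by (simp add: weight_def i)
  also have "\<dots> = 1 / D"
    using layer_bounds(1)[of i] D_ge_1 by (simp add: powr_add[symmetric])
  finally show ?thesis .
qed

lemma weighted_nbhd_sum_le:
  "(\<Sum>k\<in>I. weight k * nbhd_weight k powr (q - 1)) \<le> 1 / 2 + 2 powr (- q) * card R powr (1 - q)"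
proof -
  have "(\<Sum>k\<in>I. weight k * nbhd_weight k powr (q - 1))
      = (\<Sum>k\<in>I - R. weight k * nbhd_weight k powr (q - 1)) + (\<Sum>k\<in>R. weight k * nbhd_weight k powr (q - 1))"
    using sum.subset_diff[OF roots_subset finite_I] .
  also have "(\<Sum>k\<in>I - R. weight k * nbhd_weight k powr (q - 1)) \<le> card (I - R) * (1 / D)"
    using sum_bounded_above[of "I - R" _ "1 / D"] nbhd_term_nonroot by auto
  also have "\<dots> \<le> 1 / 2"
    using finite_I D_ge_1 card_mono[OF finite_I, of "I - R"] by (auto simp: D_def)
  also have "(\<Sum>k\<in>R. weight k * nbhd_weight k powr (q - 1)) \<le> card R * c0 powr q"
    using sum_bounded_above[of R _ "c0 powr q"] nbhd_term_root by auto
  also have "card R * c0 powr q = 2 powr (- q) * card R powr (1 - q)"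
    using card_roots
    by (simp add: c0_def powr_divide powr_mult powr_diff powr_minus_divide)
  finally show ?thesis
    by simp
qed

lemma ex_pmf_nbhd_expectation_le:
  "\<exists>\<rho>. set_pmf \<rho> = I \<and>
     measure_pmf.expectation \<rho> (\<lambda>k. measure_pmf.prob \<rho> (N k) powr (q - 1))
       \<le> 1 + 2 powr (- q) * card R powr (1 - q)"
proof -
  have "I \<noteq> {}"
    using roots_subset roots_nonempty by blast
  then obtain \<rho> where \<rho>: "set_pmf \<rho> = I"
    "measure_pmf.expectation \<rho> (\<lambda>k. measure_pmf.prob \<rho> (N k) powr (q - 1))
      = (\<Sum>k\<in>I. weight k * nbhd_weight k powr (q - 1)) / sum weight I powr q"
    using expectation_normalized_weights[OF finite_I, of weight N q] weight_pos
    unfolding nbhd_weight_def by blast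
  have "0 < sum weight I"
    using \<open>I \<noteq> {}\<close> finite_I weight_pos by (intro sum_pos) auto
  then have "1 \<le> sum weight I powr q"
    using powr_mono2'[OF q_nonpos _ sum_weight_le_1] by simp
  moreover have "0 \<le> (\<Sum>k\<in>I. weight k * nbhd_weight k powr (q - 1))"
    using weight_pos by (intro sum_nonneg) (simp add: less_imp_le)
  ultimately have "measure_pmf.expectation \<rho> (\<lambda>k. measure_pmf.prob \<rho> (N k) powr (q - 1))
      \<le> (\<Sum>k\<in>I. weight k * nbhd_weight k powr (q - 1)) / 1"
    unfolding \<rho>(2) by (intro divide_left_mono) auto
  then show ?thesis
    using \<rho>(1) weighted_nbhd_sum_le by auto
qed

end

section \<open>Dyadic cubes\<close>

definition dyadic_index :: "nat \<Rightarrow> real^'d \<Rightarrow> int^'d" where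
  "dyadic_index n y = (\<chi> j. \<lfloor>y $ j * 2 ^ n\<rfloor>)"

definition dyadic_corner :: "nat \<Rightarrow> int^'d \<Rightarrow> real^'d" where
  "dyadic_corner n k = (\<chi> j. of_int (k $ j) / 2 ^ n)"

definition cube_adjacent :: "int^'d \<Rightarrow> int^'d \<Rightarrow> bool" where
  "cube_adjacent k k' \<longleftrightarrow> (\<forall>j. \<bar>k $ j - k' $ j\<bar> \<le> 1)"

lemma mem_dyadic_cube_coord:
  "y \<in> dyadic_cube n k \<longleftrightarrow> (\<forall>j. of_int (k $ j) \<le> y $ j * 2 ^ n \<and> y $ j * 2 ^ n < of_int (k $ j) + 1)"
  unfolding dyadic_cube_def by (simp add: pos_divide_le_eq pos_less_divide_eq)

lemma mem_dyadic_cube_iff: "y \<in> dyadic_cube n k \<longleftrightarrow> k = dyadic_index n y"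
proof -
  have "k = dyadic_index n y \<longleftrightarrow> (\<forall>j. \<lfloor>y $ j * 2 ^ n\<rfloor> = k $ j)"
    by (auto simp: vec_eq_iff dyadic_index_def)
  then show ?thesis
    unfolding mem_dyadic_cube_coord by (simp add: floor_eq_iff)
qed

lemma mem_dyadic_cube_index: "y \<in> dyadic_cube n (dyadic_index n y)"
  by (simp add: mem_dyadic_cube_iff)

lemma dyadic_cube_unique: "y \<in> dyadic_cube n k \<Longrightarrow> y \<in> dyadic_cube n k' \<Longrightarrow> k = k'"
  by (simp add: mem_dyadic_cube_iff)

lemma dyadic_corner_mem: "dyadic_corner n k \<in> dyadic_cube n k"
  by (simp add: dyadic_corner_def dyadic_cube_def divide_strict_right_mono)

lemma convex_dyadic_cube: "convex (dyadic_cube n k)"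
proof -
  have "dyadic_cube n k = (\<Inter>j. (\<lambda>y. y $ j) -` {of_int (k $ j) / 2 ^ n ..< (of_int (k $ j) + 1) / 2 ^ n})"
    by (auto simp: dyadic_cube_def)
  then show ?thesis
    by (auto intro!: convex_INT convex_linear_vimage bounded_linear.linear[OF bounded_linear_vec_nth])
qed

lemma connected_dyadic_cube: "connected (dyadic_cube n k)"
  by (rule convex_connected[OF convex_dyadic_cube])

lemma closure_dyadic_cube_coord:
  assumes "y \<in> closure (dyadic_cube n k)"
  shows "of_int (k $ j) \<le> y $ j * 2 ^ n \<and> y $ j * 2 ^ n \<le> of_int (k $ j) + 1"
proof -
  have "closure (dyadic_cube n k)
      \<subseteq> cbox (\<chi> j. of_int (k $ j) / 2 ^ n) (\<chi> j. (of_int (k $ j) + 1) / 2 ^ n)"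
    by (rule closure_minimal) (auto simp: mem_box_cart dyadic_cube_def less_imp_le)
  with assms show ?thesis
    by (auto simp: mem_box_cart pos_divide_le_eq pos_le_divide_eq)
qed

lemma cube_adjacent_refl: "cube_adjacent k k"
  by (simp add: cube_adjacent_def)

lemma cube_adjacent_sym: "cube_adjacent k k' \<Longrightarrow> cube_adjacent k' k"
  by (simp add: cube_adjacent_def abs_minus_commute)

lemma cube_adjacent_if_closure:
  assumes "y \<in> closure (dyadic_cube n k)" "y \<in> dyadic_cube n k'"
  shows "cube_adjacent k k'"
  unfolding cube_adjacent_def
proof
  fix j
  have "real_of_int (k' $ j) < of_int (k $ j) + 2" "real_of_int (k $ j) < of_int (k' $ j) + 1"
    using closure_dyadic_cube_coord[OF assms(1), of j] assms(2)
    unfolding mem_dyadic_cube_coord by (smt (verit))+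
  then show "\<bar>k $ j - k' $ j\<bar> \<le> 1"
    by linarith
qed

lemma adjacent_cubes_linf_ball:
  assumes "y \<in> dyadic_cube n k" "y' \<in> dyadic_cube n k'" "cube_adjacent k k'"
  shows "y' \<in> linf_ball y (2 / 2 ^ n)"
  unfolding linf_ball_def
proof (safe)
  fix j
  have "\<bar>real_of_int (k $ j) - real_of_int (k' $ j)\<bar> \<le> 1"
    using assms(3) unfolding cube_adjacent_def by (metis of_int_abs of_int_diff of_int_le_1_iff)
  then have "\<bar>y' $ j * 2 ^ n - y $ j * 2 ^ n\<bar> \<le> 2"
    using assms(1,2) unfolding mem_dyadic_cube_coord by (smt (verit))
  then show "\<bar>y' $ j - y $ j\<bar> \<le> 2 / 2 ^ n"
    by (simp add: pos_le_divide_eq left_diff_distrib[symmetric] abs_mult)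
qed

lemma finite_vec_range:
  assumes "finite A"
  shows "finite {k :: 'a^'d. \<forall>j. k $ j \<in> A}"
proof -
  have "vec_nth ` {k :: 'a^'d. \<forall>j. k $ j \<in> A} \<subseteq> Pi\<^sub>E UNIV (\<lambda>_. A)"
    by (auto simp: PiE_UNIV_domain)
  then have "finite (vec_nth ` {k :: 'a^'d. \<forall>j. k $ j \<in> A})"
    by (rule finite_subset) (intro finite_PiE, auto simp: assms)
  then show ?thesis
    by (rule finite_imageD) (simp add: inj_on_def vec_eq_iff)
qed

lemma finite_dyadic_cubes_meeting:
  fixes K :: "(real^'d) set"
  assumes "bounded K"
  shows "finite {k. dyadic_cube n k \<inter> K \<noteq> {}}"
proof -
  obtain B where B: "\<And>x. x \<in> K \<Longrightarrow> norm x \<le> B"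
    using assms bounded_iff by blast
  define M where "M = \<lceil>B * 2 ^ n\<rceil> + 1"
  have "{k. dyadic_cube n k \<inter> K \<noteq> {}} \<subseteq> {k. \<forall>j. k $ j \<in> {-M..M}}"
  proof
    fix k :: "int^'d"
    assume "k \<in> {k. dyadic_cube n k \<inter> K \<noteq> {}}"
    then obtain y where y: "y \<in> dyadic_cube n k" "y \<in> K"
      by blast
    have "k $ j \<in> {-M..M}" for j
    proof -
      have "\<bar>y $ j\<bar> \<le> B"
        using B[OF y(2)] component_le_norm_cart[of y j] by linarith
      then have "\<bar>y $ j * 2 ^ n\<bar> \<le> B * 2 ^ n"
        by (simp add: abs_mult)
      then have "- (B * 2 ^ n) \<le> y $ j * 2 ^ n" "y $ j * 2 ^ n \<le> B * 2 ^ n"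
        by linarith+
      then have "- M \<le> \<lfloor>y $ j * 2 ^ n\<rfloor>" "\<lfloor>y $ j * 2 ^ n\<rfloor> \<le> M"
        unfolding M_def by linarith+
      moreover have "k $ j = \<lfloor>y $ j * 2 ^ n\<rfloor>"
        using y(1) by (simp add: mem_dyadic_cube_iff dyadic_index_def)
      ultimately show ?thesis
        by simp
    qed
    then show "k \<in> {k. \<forall>j. k $ j \<in> {-M..M}}"
      by simp
  qed
  then show ?thesis
    using finite_vec_range[of "{-M..M}"] finite_subset by blast
qed

section \<open>Connected components of unions of dyadic cubes\<close>

lemma separatedin_cube_unions:
  fixes I A :: "(int^'d) set"
  assumes "finite I" "A \<subseteq> I"
    and closed: "\<And>a b. a \<in> A \<Longrightarrow> b \<in> I \<Longrightarrow> cube_adjacent a b \<Longrightarrow> b \<in> A"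
  shows "separatedin euclidean (\<Union>(dyadic_cube n ` A)) (\<Union>(dyadic_cube n ` (I - A)))"
proof -
  have closure_union: "closure (\<Union>(dyadic_cube n ` S)) \<subseteq> (\<Union>k\<in>S. closure (dyadic_cube n k))"
    if "finite S" for S :: "(int^'d) set"
    using that by (intro closure_minimal closed_Union) (auto intro: closure_subset[THEN subsetD])
  have "closure (\<Union>(dyadic_cube n ` A)) \<inter> \<Union>(dyadic_cube n ` (I - A)) = {}"
    using closure_union[OF finite_subset[OF assms(2,1)]] closed cube_adjacent_if_closure
    by blast
  moreover have "\<Union>(dyadic_cube n ` A) \<inter> closure (\<Union>(dyadic_cube n ` (I - A))) = {}"
    using closure_union[of "I - A"] assms(1) closed cube_adjacent_if_closure cube_adjacent_sym
    by blast
  ultimately show ?thesis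
    unfolding separatedin_def by auto
qed

lemma reachable_if_connected_component_meets:
  fixes I :: "(int^'d) set" and n :: nat
  defines "W \<equiv> \<Union>(dyadic_cube n ` I)"
  assumes "finite I" "r \<in> I" "x \<in> dyadic_cube n r" "k \<in> I"
    and "connected_component_set W x \<inter> dyadic_cube n k \<noteq> {}"
  shows "(\<lambda>a b. a \<in> I \<and> b \<in> I \<and> cube_adjacent a b)\<^sup>*\<^sup>* r k"
proof -
  let ?E = "\<lambda>a b. a \<in> I \<and> b \<in> I \<and> cube_adjacent a b"
  define A where "A = {k' \<in> I. ?E\<^sup>*\<^sup>* r k'}"
  define U where "U = connected_component_set W x"
  have A: "A \<subseteq> I" "r \<in> A"
    using assms(3) by (auto simp: A_def)
  have "b \<in> A" if "a \<in> A" "b \<in> I" "cube_adjacent a b" for a b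
    using that by (auto simp: A_def intro: rtranclp.rtrancl_into_rtrancl)
  then have sep: "separatedin euclidean (\<Union>(dyadic_cube n ` A)) (\<Union>(dyadic_cube n ` (I - A)))"
    using assms(2) A(1) by (intro separatedin_cube_unions)
  have "W = \<Union>(dyadic_cube n ` A) \<union> \<Union>(dyadic_cube n ` (I - A))"
    unfolding W_def using A(1) by blast
  then have "U \<subseteq> \<Union>(dyadic_cube n ` A) \<union> \<Union>(dyadic_cube n ` (I - A))"
    using connected_component_subset[of W x] unfolding U_def by blast
  then have "U \<subseteq> \<Union>(dyadic_cube n ` A) \<or> U \<subseteq> \<Union>(dyadic_cube n ` (I - A))"
    using connectedin_subset_separated_union[OF _ sep] by (simp add: U_def)
  moreover have "x \<in> U"
    using assms(3,4) by (auto simp: U_def W_def)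
  moreover have "x \<notin> \<Union>(dyadic_cube n ` (I - A))"
    using assms(4) A(2) dyadic_cube_unique by blast
  ultimately have "U \<subseteq> \<Union>(dyadic_cube n ` A)"
    by blast
  then have "k \<in> A"
    using assms(6) dyadic_cube_unique unfolding U_def by blast
  then show ?thesis
    by (simp add: A_def)
qed

lemma finite_components_cube_union:
  fixes I :: "(int^'d) set"
  assumes "finite I"
  shows "finite (components (\<Union>(dyadic_cube n ` I)))"
proof -
  define W where "W = \<Union>(dyadic_cube n ` I)"
  have "components W \<subseteq> (\<lambda>k. connected_component_set W (dyadic_corner n k)) ` I"
  proof
    fix U
    assume "U \<in> components W"
    then obtain x where x: "x \<in> W" "U = connected_component_set W x"
      by (auto simp: components_iff)
    then obtain k where k: "k \<in> I" "x \<in> dyadic_cube n k"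
      by (auto simp: W_def)
    have "dyadic_cube n k \<subseteq> connected_component_set W x"
      using k by (intro connected_component_maximal connected_dyadic_cube) (auto simp: W_def)
    then have "U = connected_component_set W (dyadic_corner n k)"
      using x(2) dyadic_corner_mem[of n k] connected_component_eq by blast
    then show "U \<in> (\<lambda>k. connected_component_set W (dyadic_corner n k)) ` I"
      using k(1) by blast
  qed
  then show ?thesis
    using assms finite_subset unfolding W_def by blast
qed

lemma ex_cube_roots:
  fixes I :: "(int^'d) set"
  assumes "finite I" "I \<noteq> {}"
  shows "\<exists>R\<subseteq>I. R \<noteq> {} \<and> card R \<le> card (components (\<Union>(dyadic_cube n ` I))) \<and>
           (\<forall>k\<in>I. \<exists>r\<in>R. (\<lambda>a b. a \<in> I \<and> b \<in> I \<and> cube_adjacent a b)\<^sup>*\<^sup>* r k)"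
proof -
  define W where "W = \<Union>(dyadic_cube n ` I)"
  have "\<exists>k. k \<in> I \<and> U \<inter> dyadic_cube n k \<noteq> {}" if "U \<in> components W" for U
    using in_components_nonempty[OF that] in_components_subset[OF that] by (auto simp: W_def)
  then obtain root where root: "root U \<in> I" "U \<inter> dyadic_cube n (root U) \<noteq> {}"
    if "U \<in> components W" for U
    by metis
  define R where "R = root ` components W"
  have "R \<subseteq> I"
    using root(1) by (auto simp: R_def)
  moreover have "card R \<le> card (components W)"
    unfolding R_def using finite_components_cube_union[OF assms(1)] by (simp add: W_def card_image_le)
  moreover have "W \<noteq> {}"
    using assms(2) dyadic_corner_mem by (auto simp: W_def)
  then have "R \<noteq> {}"
    by (simp add: R_def)
  moreover have "\<exists>r\<in>R. (\<lambda>a b. a \<in> I \<and> b \<in> I \<and> cube_adjacent a b)\<^sup>*\<^sup>* r k" if k: "k \<in> I" for k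
  proof -
    define U where "U = connected_component_set W (dyadic_corner n k)"
    have "dyadic_corner n k \<in> W"
      using k dyadic_corner_mem by (auto simp: W_def)
    then have U: "U \<in> components W" "dyadic_corner n k \<in> U"
      by (auto simp: U_def components_iff)
    obtain x where x: "x \<in> U" "x \<in> dyadic_cube n (root U)"
      using root(2)[OF U(1)] by blast
    have "connected_component_set W x = U"
      using x(1) unfolding U_def by (rule connected_component_eq)
    then have "connected_component_set W x \<inter> dyadic_cube n k \<noteq> {}"
      using U(2) dyadic_corner_mem by blast
    then have "(\<lambda>a b. a \<in> I \<and> b \<in> I \<and> cube_adjacent a b)\<^sup>*\<^sup>* (root U) k"
      using assms(1) root(1)[OF U(1)] x(2) k unfolding W_def
      by (intro reachable_if_connected_component_meets)
    then show ?thesis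
      using U(1) by (auto simp: R_def)
  qed
  ultimately show ?thesis
    unfolding W_def by blast
qed

section \<open>The measure \<open>\<nu>_n\<close>\<close>

lemma linf_ball_mono: "r \<le> s \<Longrightarrow> linf_ball x r \<subseteq> linf_ball x s"
proof
  fix y
  assume "r \<le> s" "y \<in> linf_ball x r"
  then show "y \<in> linf_ball x s"
    unfolding linf_ball_def by (smt (verit) mem_Collect_eq)
qed

lemma centre_in_linf_ball: "0 \<le> r \<Longrightarrow> x \<in> linf_ball x r"
  by (simp add: linf_ball_def)

lemma C_n_eq_card_components:
  "C_n n K = card (components (\<Union>(dyadic_cube n ` {k. dyadic_cube n k \<inter> K \<noteq> {}})))"
proof -
  have "{dyadic_cube n k | k. dyadic_cube n k \<inter> K \<noteq> {}} = dyadic_cube n ` {k. dyadic_cube n k \<inter> K \<noteq> {}}"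
    by blast
  then show ?thesis
    by (simp add: C_n_def)
qed

lemma I_nu_mixture_le:
  fixes \<mu> \<nu> :: "(real^'d) pmf"
  assumes "finite (set_pmf \<mu>)" "finite (set_pmf \<nu>)" "0 < \<theta>" "\<theta> < 1" "q \<le> 0" "0 \<le> r"
  shows "I_nu (mixture \<theta> \<mu> \<nu>) r q
    \<le> card (set_pmf \<mu>) * (1 - \<theta>) powr q * Min (pmf \<mu> ` set_pmf \<mu>) powr q + \<theta> powr q * I_nu \<nu> r q"
  unfolding I_nu_def using assms(6)
  by (intro expectation_mixture_ball_le[OF assms(1-5)] centre_in_linf_ball)

lemma ex_cube_pmf_nbhd_expectation_le:
  fixes I :: "(int^'d) set" and n :: nat and q :: real
  assumes "finite I" "I \<noteq> {}" "q \<le> 0"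
  shows "\<exists>\<rho>. set_pmf \<rho> = I \<and>
     measure_pmf.expectation \<rho> (\<lambda>k. measure_pmf.prob \<rho> {k'. cube_adjacent k k'} powr (q - 1))
       \<le> 1 + 2 powr (- q) * card (components (\<Union>(dyadic_cube n ` I))) powr (1 - q)"
proof -
  obtain R where R: "R \<subseteq> I" "R \<noteq> {}" "card R \<le> card (components (\<Union>(dyadic_cube n ` I)))"
    and reach: "\<And>k. k \<in> I \<Longrightarrow> \<exists>r\<in>R. (\<lambda>a b. a \<in> I \<and> b \<in> I \<and> cube_adjacent a b)\<^sup>*\<^sup>* r k"
    using ex_cube_roots[OF assms(1,2), of n] by blast
  obtain d :: "int^'d \<Rightarrow> nat" where d: "\<And>k. k \<in> R \<Longrightarrow> d k = 0"
    and parent: "\<And>k. k \<in> I - R \<Longrightarrow> \<exists>z. (z \<in> I \<and> k \<in> I \<and> cube_adjacent z k) \<and> d z < d k"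
    using ex_distance_from_roots[of I R, OF reach] by blast
  interpret rooted_layering I R "\<lambda>k. {k'. cube_adjacent k k'}" d q
  proof
    show "finite I" "R \<subseteq> I" "R \<noteq> {}" "q \<le> 0"
      using assms(1,3) R(1,2) by auto
    show "k \<in> {k'. cube_adjacent k k'}" for k
      by (simp add: cube_adjacent_refl)
    show "d k = 0" if "k \<in> R" for k
      using d that .
    show "\<exists>z\<in>{k'. cube_adjacent k k'} \<inter> I. d z < d k" if "k \<in> I - R" for k
      using parent[OF that] cube_adjacent_sym by auto
  qed
  obtain \<rho> where \<rho>: "set_pmf \<rho> = I"
    "measure_pmf.expectation \<rho> (\<lambda>k. measure_pmf.prob \<rho> {k'. cube_adjacent k k'} powr (q - 1))
       \<le> 1 + 2 powr (- q) * card R powr (1 - q)"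
    using ex_pmf_nbhd_expectation_le by blast
  moreover have "2 powr (- q) * card R powr (1 - q)
      \<le> 2 powr (- q) * card (components (\<Union>(dyadic_cube n ` I))) powr (1 - q)"
    using R(3) assms(3) by (auto intro!: mult_left_mono powr_mono2)
  ultimately have "measure_pmf.expectation \<rho> (\<lambda>k. measure_pmf.prob \<rho> {k'. cube_adjacent k k'} powr (q - 1))
      \<le> 1 + 2 powr (- q) * card (components (\<Union>(dyadic_cube n ` I))) powr (1 - q)"
    by linarith
  with \<rho>(1) show ?thesis
    by blast
qed

lemma I_nu_map_pmf_le:
  fixes \<rho> :: "(int^'d) pmf" and p :: "int^'d \<Rightarrow> real^'d"
  assumes "finite (set_pmf \<rho>)" "\<And>k. k \<in> set_pmf \<rho> \<Longrightarrow> p k \<in> dyadic_cube n k"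
    and "2 / 2 ^ n \<le> r" "q \<le> 0"
  shows "I_nu (map_pmf p \<rho>) r q
    \<le> measure_pmf.expectation \<rho> (\<lambda>k. measure_pmf.prob \<rho> {k'. cube_adjacent k k'} powr (q - 1))"
proof -
  have "I_nu (map_pmf p \<rho>) r q
      = measure_pmf.expectation \<rho> (\<lambda>k. measure_pmf.prob \<rho> (p -` linf_ball (p k) r) powr (q - 1))"
    by (simp add: I_nu_def)
  also have "\<dots> \<le> measure_pmf.expectation \<rho> (\<lambda>k. measure_pmf.prob \<rho> {k'. cube_adjacent k k'} powr (q - 1))"
  proof (rule expectation_mono_pmf[OF assms(1)])
    fix k
    assume k: "k \<in> set_pmf \<rho>"
    have "{k'. cube_adjacent k k'} \<inter> set_pmf \<rho> \<subseteq> p -` linf_ball (p k) r"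
      using adjacent_cubes_linf_ball[OF assms(2)[OF k] assms(2)] linf_ball_mono[OF assms(3)] by blast
    then have "measure_pmf.prob \<rho> {k'. cube_adjacent k k'} \<le> measure_pmf.prob \<rho> (p -` linf_ball (p k) r)"
      by (metis measure_Int_set_pmf measure_pmf.finite_measure_mono sets_measure_pmf UNIV_I)
    moreover have "0 < measure_pmf.prob \<rho> {k'. cube_adjacent k k'}"
      using k cube_adjacent_refl by (intro measure_pmf_posI) auto
    ultimately show "measure_pmf.prob \<rho> (p -` linf_ball (p k) r) powr (q - 1)
        \<le> measure_pmf.prob \<rho> {k'. cube_adjacent k k'} powr (q - 1)"
      using assms(4) by (intro powr_mono2') auto
  qed
  finally show ?thesis .
qed

lemma ex_dyadic_point_measure:
  fixes K :: "(real^'d) set" and n :: nat and q r :: real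
  assumes "bounded K" "K \<noteq> {}" "q \<le> 0" "2 / 2 ^ n \<le> r"
  shows "\<exists>\<nu>. finite (set_pmf \<nu>) \<and> set_pmf \<nu> \<subseteq> K \<and>
     (\<forall>x\<in>K. set_pmf \<nu> \<inter> linf_ball x r \<noteq> {}) \<and>
     I_nu \<nu> r q \<le> 1 + 2 powr (- q) * C_n n K powr (1 - q)"
proof -
  define I where "I = {k. dyadic_cube n k \<inter> K \<noteq> {}}"
  obtain x0 where "x0 \<in> K"
    using assms(2) by blast
  then have I: "finite I" "I \<noteq> {}"
    using finite_dyadic_cubes_meeting[OF assms(1)] mem_dyadic_cube_index[of x0 n]
    by (auto simp: I_def)
  obtain \<rho> where \<rho>: "set_pmf \<rho> = I"
    "measure_pmf.expectation \<rho> (\<lambda>k. measure_pmf.prob \<rho> {k'. cube_adjacent k k'} powr (q - 1))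
       \<le> 1 + 2 powr (- q) * C_n n K powr (1 - q)"
    using ex_cube_pmf_nbhd_expectation_le[OF I assms(3), of n] unfolding C_n_eq_card_components I_def[symmetric]
    by blast
  have "\<forall>k\<in>I. \<exists>y. y \<in> dyadic_cube n k \<and> y \<in> K"
    unfolding I_def by blast
  then obtain p where p: "\<And>k. k \<in> I \<Longrightarrow> p k \<in> dyadic_cube n k \<and> p k \<in> K"
    by metis
  have "set_pmf (map_pmf p \<rho>) \<inter> linf_ball x r \<noteq> {}" if "x \<in> K" for x
  proof -
    have "dyadic_index n x \<in> I"
      using that mem_dyadic_cube_index by (auto simp: I_def)
    then show ?thesis
      using adjacent_cubes_linf_ball[OF mem_dyadic_cube_index _ cube_adjacent_refl] p
        linf_ball_mono[OF assms(4)] \<rho>(1) by fastforce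
  qed
  moreover have "I_nu (map_pmf p \<rho>) r q \<le> 1 + 2 powr (- q) * C_n n K powr (1 - q)"
    using I_nu_map_pmf_le[of \<rho> p n r q] I(1) p \<rho> assms(3,4) by force
  ultimately show ?thesis
    using I(1) p \<rho>(1) by (intro exI[of _ "map_pmf p \<rho>"]) auto
qed

theorem lemma2p14:
  fixes K :: "(real^'d) set" and n :: nat and q :: real
  assumes "compact K" and "K \<noteq> {}" and "n \<ge> 1" and "q \<le> 0"
  shows "\<exists>\<nu>n :: (real^'d) pmf. finite (set_pmf \<nu>n) \<and> set_pmf \<nu>n \<subseteq> K \<and>
    (\<forall>(\<mu> :: (real^'d) pmf) \<theta>. finite (set_pmf \<mu>) \<and> set_pmf \<mu> \<subseteq> K \<and> 0 < \<theta> \<and> \<theta> < 1 \<longrightarrow>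
       (let \<nu> = mixture \<theta> \<mu> \<nu>n; N = card (set_pmf \<mu>); a = Min (pmf \<mu> ` set_pmf \<mu>) in
          I_nu \<nu> (3 * 2 powr (- real n)) q
            \<le> real N * (1 - \<theta>) powr q * a powr q + \<theta> powr q
               + \<theta> powr q / 2 powr q * real (C_n n K) powr (1 - q)
          \<and> (\<forall>x\<in>K. measure_pmf.prob \<nu> (linf_ball x (3 * 2 powr (- real n))) > 0)))"
proof -
  define r where "r = 3 * 2 powr (- real n)"
  have r: "r = 3 / 2 ^ n"
    by (simp add: r_def powr_minus divide_inverse powr_realpow)
  obtain \<nu>n where \<nu>n: "finite (set_pmf \<nu>n)" "set_pmf \<nu>n \<subseteq> K"
    and covers: "\<And>x. x \<in> K \<Longrightarrow> set_pmf \<nu>n \<inter> linf_ball x r \<noteq> {}"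
    and bound: "I_nu \<nu>n r q \<le> 1 + 2 powr (- q) * C_n n K powr (1 - q)"
    using ex_dyadic_point_measure[OF compact_imp_bounded[OF assms(1)] assms(2,4), of n r]
    by (auto simp: r divide_right_mono)
  have bound': "\<theta> powr q * I_nu \<nu>n r q \<le> \<theta> powr q + \<theta> powr q / 2 powr q * C_n n K powr (1 - q)" for \<theta>
    using mult_left_mono[OF bound, of "\<theta> powr q"] by (simp add: powr_minus_divide algebra_simps)
  show ?thesis
    unfolding r_def[symmetric] Let_def
  proof (intro exI[of _ \<nu>n] conjI allI impI ballI \<nu>n)
    fix \<mu> :: "(real^'d) pmf" and \<theta> :: real
    assume "finite (set_pmf \<mu>) \<and> set_pmf \<mu> \<subseteq> K \<and> 0 < \<theta> \<and> \<theta> < 1"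
    then show "I_nu (mixture \<theta> \<mu> \<nu>n) r q \<le> real (card (set_pmf \<mu>)) * (1 - \<theta>) powr q
        * Min (pmf \<mu> ` set_pmf \<mu>) powr q + \<theta> powr q + \<theta> powr q / 2 powr q * real (C_n n K) powr (1 - q)"
      using I_nu_mixture_le[OF _ \<nu>n(1) _ _ assms(4), of \<mu> \<theta> r] bound'[of \<theta>] r by force
  next
    fix \<mu> :: "(real^'d) pmf" and \<theta> :: real and x
    assume "finite (set_pmf \<mu>) \<and> set_pmf \<mu> \<subseteq> K \<and> 0 < \<theta> \<and> \<theta> < 1" "x \<in> K"
    then show "0 < measure_pmf.prob (mixture \<theta> \<mu> \<nu>n) (linf_ball x r)"
      using covers by (intro measure_pmf_prob_mixture_pos) auto
  qed
qed

end
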